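(* Let $K^f$ and $K^s$ be $n_s\times n_s$ Markov chain generators. Suppose $K^f=\mathrm{diag}(K^f_1,\dots,K^f_l)$ is block diagonal, and let $K^s$ be partitioned conformally into blocks $K^s_{i,j}$, where $K^s_{i,i}=K^s_i$. Let $L$ and $\Pi$ be the matrices constructed from $K^f$ as described in the context. Then $\tilde K=LK^s\Pi$ is the generator of a Markov chain. That is, every column of $\tilde K$ sums to zero and every off-diagonal entry of $\tilde K$ is nonnegative.
   Context: A real square matrix is a Markov chain generator if all its off-diagonal entries are nonnegative and all its column sums are zero. Each block $K^f_i$ is an $m_i\times m_i$ Markov generator. It describes fast transitions among the states of the $i$-th fast component. Its directed graph has an edge $q\to p$ iff $(K^f_i)_{pq}>0$. Decompose this graph into strongly connected components, classified as follows: - absorbing: no edges leave it to another strong component; - sources: no edges enter it from another strong component, but some leave; - internal: all others. Order the states of component $i$ as follows: first the $p_i$ isolated absorbing states (absorbing strong components consisting of a single state); then the states of the $q_i$ absorbing strong components having at least two states, component by component; then states of internal strong components; then states of sources. With this ordering, $$K^f_i=\begin{pmatrix}K^{f,ab}_i&K^{f,ab,in}_i&K^{f,ab,so}_i\\0&K^{f,in}_i&K^{f,in,so}_i\\0&0&K^{f,so}_i\end{pmatrix},$$ where $K^{f,ab}_i=\mathrm{diag}(0_{p_i},K^{f,ab}_{i,1},\dots,K^{f,ab}_{i,q_i})$. Here $K^{f,ab}_{i,j}$ is the $m^{ab}_{i,j}\times m^{ab}_{i,j}$ generator restricted to the $j$-th absorbing strong component with at least two states. The blocks $K^{f,in}_i$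 and $K^{f,so}_i$ are nonsingular. Let $\pi^{ab}_{i,j}$ be the unique probability vector with $K^{f,ab}_{i,j}\pi^{ab}_{i,j}=0$. Define $$\tilde\Pi_i=\mathrm{diag}(I_{p_i},\pi^{ab}_{i,1},\dots,\pi^{ab}_{i,q_i}).$$ Let $\Pi_i$ be $\tilde\Pi_i$ augmented below by zero rows for all internal and source states, and set $\Pi=\mathrm{diag}(\Pi_1,\dots,\Pi_l)$. Define $$\tilde L_i=\mathrm{diag}(I_{p_i},\mathbf 1^T_{m^{ab}_{i,1}},\dots,\mathbf 1^T_{m^{ab}_{i,q_i}}),$$ where $\mathbf 1^T_k=[1,\dots,1]$ of length $k$. Further define $$A_i=-\tilde L_iK^{f,ab,in}_i(K^{f,in}_i)^{-1},\qquad B_i=-(\tilde L_iK^{f,ab,so}_i+A_iK^{f,in,so}_i)(K^{f,so}_i)^{-1},$$ $L_i=[\,\tilde L_i\mid A_i\mid B_i\,]$, and $L=\mathrm{diag}(L_1,\dots,L_l)$. Then $LK^f=0$ and $K^f\Pi=0$. *)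

theory Defs
  imports Complex_Main
begin

text \<open>Matrices are real functions of two natural-number indices; an n x n matrix
uses the indices in {..<n}.  Reduced (lumped) matrices are indexed by the absorbing
strong components (sets of states).\<close>

type_synonym rmat = "nat \<Rightarrow> nat \<Rightarrow> real"

definition generator_on :: "'a set \<Rightarrow> ('a \<Rightarrow> 'a \<Rightarrow> real) \<Rightarrow> bool" where
  "generator_on I K \<longleftrightarrow>
     (\<forall>p\<in>I. \<forall>q\<in>I. p \<noteq> q \<longrightarrow> 0 \<le> K p q) \<and> (\<forall>q\<in>I. (\<Sum>p\<in>I. K p q) = 0)"

definition blk_offset :: "nat list \<Rightarrow> nat \<Rightarrow> nat" where
  "blk_offset ms i = sum_list (take i ms)"

definition block :: "nat list \<Rightarrow> nat \<Rightarrow> nat set" where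
  "block ms i = {blk_offset ms i ..< blk_offset ms (Suc i)}"

definition block_diag :: "nat \<Rightarrow> nat list \<Rightarrow> rmat \<Rightarrow> bool" where
  "block_diag n ms K \<longleftrightarrow> sum_list ms = n \<and>
     (\<forall>i<length ms. \<forall>p\<in>block ms i. \<forall>q<n. q \<notin> block ms i \<longrightarrow> K p q = 0 \<and> K q p = 0)"

definition edges :: "nat \<Rightarrow> rmat \<Rightarrow> (nat \<times> nat) set" where
  "edges n K = {(q, p). q < n \<and> p < n \<and> p \<noteq> q \<and> K p q > 0}"

definition scc :: "nat \<Rightarrow> rmat \<Rightarrow> nat \<Rightarrow> nat set" where
  "scc n K p = {q. q < n \<and> (p, q) \<in> (edges n K)\<^sup>* \<and> (q, p) \<in> (edges n K)\<^sup>*}"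

definition sccs :: "nat \<Rightarrow> rmat \<Rightarrow> nat set set" where
  "sccs n K = scc n K ` {..<n}"

definition is_absorbing :: "nat \<Rightarrow> rmat \<Rightarrow> nat set \<Rightarrow> bool" where
  "is_absorbing n K C \<longleftrightarrow> (\<forall>x\<in>C. \<forall>y. (x, y) \<in> edges n K \<longrightarrow> y \<in> C)"

definition is_source :: "nat \<Rightarrow> rmat \<Rightarrow> nat set \<Rightarrow> bool" where
  "is_source n K C \<longleftrightarrow> \<not> is_absorbing n K C \<and>
     (\<forall>x\<in>C. \<forall>y. (y, x) \<in> edges n K \<longrightarrow> y \<in> C)"

text \<open>The absorbing strong components (isolated absorbing states are the singleton
ones); they index the reduced chain.\<close>
definition abs_classes :: "nat \<Rightarrow> rmat \<Rightarrow> nat set set" where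
  "abs_classes n K = {C \<in> sccs n K. is_absorbing n K C}"

definition ab_states :: "nat \<Rightarrow> rmat \<Rightarrow> nat set" where
  "ab_states n K = \<Union>(abs_classes n K)"

definition so_states :: "nat \<Rightarrow> rmat \<Rightarrow> nat set" where
  "so_states n K = {p. p < n \<and> is_source n K (scc n K p)}"

definition in_states :: "nat \<Rightarrow> rmat \<Rightarrow> nat set" where
  "in_states n K = {p. p < n \<and> \<not> is_absorbing n K (scc n K p) \<and> \<not> is_source n K (scc n K p)}"

text \<open>pi^{ab}: the unique probability vector (supported on C) in the kernel of the
generator restricted to the absorbing component C; for an isolated absorbing state it is
the unit vector (identity block).\<close>
definition stat_vec :: "rmat \<Rightarrow> nat set \<Rightarrow> nat \<Rightarrow> real" where
  "stat_vec K C = (if card C = 1 then (\<lambda>p. if p \<in> C then 1 else 0) else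
     (THE v. (\<forall>p. p \<notin> C \<longrightarrow> v p = 0) \<and> (\<forall>p\<in>C. 0 \<le> v p) \<and> sum v C = 1 \<and>
             (\<forall>p\<in>C. (\<Sum>q\<in>C. K p q * v q) = 0)))"

definition PiM :: "nat \<Rightarrow> rmat \<Rightarrow> nat \<Rightarrow> nat set \<Rightarrow> real" where
  "PiM n K p C = (if C \<in> abs_classes n K then stat_vec K C p else 0)"

definition Ltil :: "nat \<Rightarrow> rmat \<Rightarrow> nat set \<Rightarrow> nat \<Rightarrow> real" where
  "Ltil n K C p = (if C \<in> abs_classes n K \<and> p \<in> C then 1 else 0)"

text \<open>A = - Ltilde K^{ab,in} (K^{in})^{-1}, i.e. the unique A with
A K^{in} = - Ltilde K^{ab,in}.\<close>
definition Amat :: "nat \<Rightarrow> rmat \<Rightarrow> nat set \<Rightarrow> nat \<Rightarrow> real" where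
  "Amat n K = (THE A.
     (\<forall>C q. C \<notin> abs_classes n K \<or> q \<notin> in_states n K \<longrightarrow> A C q = 0) \<and>
     (\<forall>C\<in>abs_classes n K. \<forall>q\<in>in_states n K.
        (\<Sum>r\<in>in_states n K. A C r * K r q) =
          - (\<Sum>p\<in>ab_states n K. Ltil n K C p * K p q)))"

text \<open>B = -(Ltilde K^{ab,so} + A K^{in,so}) (K^{so})^{-1}, i.e. the unique B with
B K^{so} = -(Ltilde K^{ab,so} + A K^{in,so}).\<close>
definition Bmat :: "nat \<Rightarrow> rmat \<Rightarrow> nat set \<Rightarrow> nat \<Rightarrow> real" where
  "Bmat n K = (THE B.
     (\<forall>C q. C \<notin> abs_classes n K \<or> q \<notin> so_states n K \<longrightarrow> B C q = 0) \<and>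
     (\<forall>C\<in>abs_classes n K. \<forall>q\<in>so_states n K.
        (\<Sum>r\<in>so_states n K. B C r * K r q) =
          - ((\<Sum>p\<in>ab_states n K. Ltil n K C p * K p q)
             + (\<Sum>r\<in>in_states n K. Amat n K C r * K r q))))"

definition LM :: "nat \<Rightarrow> rmat \<Rightarrow> nat set \<Rightarrow> nat \<Rightarrow> real" where
  "LM n K C p = (if p \<in> ab_states n K then Ltil n K C p
                 else if p \<in> in_states n K then Amat n K C p
                 else if p \<in> so_states n K then Bmat n K C p else 0)"

definition Ktilde :: "nat \<Rightarrow> rmat \<Rightarrow> rmat \<Rightarrow> nat set \<Rightarrow> nat set \<Rightarrow> real" where
  "Ktilde n Kf Ks C D = (\<Sum>p<n. \<Sum>q<n. LM n Kf C p * Ks p q * PiM n Kf q D)"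

end

theory Submission
  imports Defs "Jordan_Normal_Form.Determinant"
begin

text \<open>Both \<open>L\<close> and \<open>\<Pi>\<close> are entrywise nonnegative, \<open>\<Pi>\<close> is supported on the absorbing
components, and every column of \<open>L\<close> sums to one; for any such pair, \<open>L K\<^sup>s \<Pi>\<close> inherits the
generator property from \<open>K\<^sup>s\<close>.

The two properties of \<open>L\<close> come from \<open>L K\<^sup>f = 0\<close> and a minimum principle: every state outside
the absorbing components can reach one of them, so a left null vector of \<open>K\<^sup>f\<close> (on the columns
of those states) attains its minimum on the absorbing states. Applied to a row of \<open>L\<close>, and to
\<open>\<one>\<^sup>T L - \<one>\<^sup>T\<close> and its negative, this gives nonnegativity and the column sums. The same
principle makes the linear systems defining \<open>A\<close> and \<open>B\<close> uniquely solvable.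

For \<open>\<Pi>\<close>, the positive part of a kernel vector of the generator of an absorbing component is
again in the kernel, and zeros of a nonnegative kernel vector spread through the (strongly
connected) component; this yields a nonnegative stationary vector and its uniqueness.\<close>

locale finite_enumeration =
  fixes S :: "'a set" and k :: nat and f :: "nat \<Rightarrow> 'a"
  assumes bij: "bij_betw f {..<k} S"
begin

definition index :: "'a \<Rightarrow> nat" where
  "index = inv_into {..<k} f"

lemma index_lt: "p \<in> S \<Longrightarrow> index p < k"
  using bij_betw_inv_into[OF bij] unfolding index_def bij_betw_def by auto

lemma f_index: "p \<in> S \<Longrightarrow> f (index p) = p"
  using bij unfolding index_def by (simp add: bij_betw_def f_inv_into_f)

lemma index_f: "j < k \<Longrightarrow> index (f j) = j"
  using bij unfolding index_def bij_betw_def by (simp add: inv_into_f_f)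

lemma f_in: "j < k \<Longrightarrow> f j \<in> S"
  using bij unfolding bij_betw_def by auto

lemma ball_iff_all_index: "(\<forall>p\<in>S. P p) \<longleftrightarrow> (\<forall>j<k. P (f j))"
proof
  assume "\<forall>j<k. P (f j)"
  then show "\<forall>p\<in>S. P p"
    using f_index index_lt by force
qed (use f_in in blast)

lemma sum_reindex: "(\<Sum>q\<in>S. h q) = (\<Sum>j<k. h (f j))"
  using sum.reindex_bij_betw[OF bij, of h] by simp

definition mat_of :: "('a \<Rightarrow> 'a \<Rightarrow> 'b) \<Rightarrow> 'b mat" where
  "mat_of M = mat k k (\<lambda>(i, j). M (f i) (f j))"

definition vec_of :: "('a \<Rightarrow> 'b) \<Rightarrow> 'b vec" where
  "vec_of x = vec k (\<lambda>j. x (f j))"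

lemma mat_of_carrier: "mat_of M \<in> carrier_mat k k"
  unfolding mat_of_def by simp

lemma vec_of_carrier: "vec_of x \<in> carrier_vec k"
  unfolding vec_of_def by simp

lemma mat_of_mult_vec_of:
  "mat_of M *\<^sub>v vec_of x = vec_of (\<lambda>p. \<Sum>q\<in>S. M p q * x q)"
  by (rule eq_vecI)
    (auto simp: mat_of_def vec_of_def sum_reindex scalar_prod_def row_def lessThan_atLeast0)

lemma vec_of_eq_zero_iff: "vec_of x = 0\<^sub>v k \<longleftrightarrow> (\<forall>p\<in>S. x p = 0)"
proof -
  have "vec_of x = 0\<^sub>v k \<longleftrightarrow> (\<forall>j<k. x (f j) = 0)"
    unfolding vec_of_def by (auto simp: vec_eq_iff)
  also have "\<dots> \<longleftrightarrow> (\<forall>p\<in>S. x p = 0)"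
    by (rule ball_iff_all_index[symmetric])
  finally show ?thesis .
qed

lemma vec_eq_vec_of: "v \<in> carrier_vec k \<Longrightarrow> v = vec_of (\<lambda>p. v $ index p)"
  unfolding vec_of_def by (auto simp: index_f)

lemma transpose_mat_of: "transpose_mat (mat_of M) = mat_of (\<lambda>p q. M q p)"
  unfolding mat_of_def by (rule eq_matI) auto

lemma det_mat_of_eq_0_iff:
  fixes M :: "'a \<Rightarrow> 'a \<Rightarrow> 'b :: field"
  shows "det (mat_of M) = 0 \<longleftrightarrow> (\<exists>x. (\<exists>p\<in>S. x p \<noteq> 0) \<and> (\<forall>p\<in>S. (\<Sum>q\<in>S. M p q * x q) = 0))"
proof
  assume "det (mat_of M) = 0"
  then obtain v where v: "v \<in> carrier_vec k" "v \<noteq> 0\<^sub>v k" "mat_of M *\<^sub>v v = 0\<^sub>v k"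
    using det_0_iff_vec_prod_zero[OF mat_of_carrier] by auto
  define x where "x p = v $ index p" for p
  have "vec_of x = v"
    unfolding x_def by (rule vec_eq_vec_of[OF v(1), symmetric])
  then have "vec_of x \<noteq> 0\<^sub>v k" "mat_of M *\<^sub>v vec_of x = 0\<^sub>v k"
    using v by auto
  then show "\<exists>x. (\<exists>p\<in>S. x p \<noteq> 0) \<and> (\<forall>p\<in>S. (\<Sum>q\<in>S. M p q * x q) = 0)"
    unfolding mat_of_mult_vec_of vec_of_eq_zero_iff by blast
next
  assume "\<exists>x. (\<exists>p\<in>S. x p \<noteq> 0) \<and> (\<forall>p\<in>S. (\<Sum>q\<in>S. M p q * x q) = 0)"
  then obtain x where "vec_of x \<noteq> 0\<^sub>v k" "mat_of M *\<^sub>v vec_of x = 0\<^sub>v k"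
    by (auto simp: mat_of_mult_vec_of vec_of_eq_zero_iff)
  then show "det (mat_of M) = 0"
    using det_0_iff_vec_prod_zero[OF mat_of_carrier] vec_of_carrier by blast
qed

lemma solvable_if_det_mat_of_nonzero:
  fixes M :: "'a \<Rightarrow> 'a \<Rightarrow> 'b :: field"
  assumes "det (mat_of M) \<noteq> 0"
  shows "\<exists>x. \<forall>p\<in>S. (\<Sum>q\<in>S. M p q * x q) = c p"
proof -
  obtain B where B: "B \<in> carrier_mat k k" "mat_of M * B = 1\<^sub>m k"
    using det_non_zero_imp_unit[OF mat_of_carrier assms, of "()"]
    unfolding Units_def ring_mat_def by auto
  define v where "v = B *\<^sub>v vec_of c"
  have v: "v \<in> carrier_vec k"
    unfolding v_def by (rule mult_mat_vec_carrier[OF B(1) vec_of_carrier])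
  have "mat_of M *\<^sub>v v = (mat_of M * B) *\<^sub>v vec_of c"
    unfolding v_def by (rule assoc_mult_mat_vec[symmetric, OF mat_of_carrier B(1) vec_of_carrier])
  also have "\<dots> = vec_of c"
    using B(2) one_mult_mat_vec[OF vec_of_carrier] by simp
  finally have "mat_of M *\<^sub>v v = vec_of c" .
  moreover have "mat_of M *\<^sub>v v = vec_of (\<lambda>p. \<Sum>q\<in>S. M p q * v $ index q)"
    by (subst vec_eq_vec_of[OF v]) (rule mat_of_mult_vec_of)
  ultimately have "vec_of (\<lambda>p. \<Sum>q\<in>S. M p q * v $ index q) = vec_of c"
    by simp
  then have "\<forall>j<k. (\<Sum>q\<in>S. M (f j) q * v $ index q) = c (f j)"
    unfolding vec_of_def by (simp add: vec_eq_iff)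
  then show ?thesis
    by (intro exI[of _ "\<lambda>q. v $ index q"] ball_iff_all_index[THEN iffD2])
qed

end

lemma finite_enumeration_exists:
  assumes "finite S"
  obtains f where "finite_enumeration S (card S) f"
  using ex_bij_betw_nat_finite[OF assms] that
  by (auto simp: finite_enumeration_def atLeast0LessThan)

lemma right_kernel_nontrivial_if_left_kernel_nontrivial:
  fixes M :: "'a \<Rightarrow> 'a \<Rightarrow> 'b :: field"
  assumes "finite S" and "\<exists>y. (\<exists>q\<in>S. y q \<noteq> 0) \<and> (\<forall>q\<in>S. (\<Sum>p\<in>S. y p * M p q) = 0)"
  shows "\<exists>x. (\<exists>p\<in>S. x p \<noteq> 0) \<and> (\<forall>p\<in>S. (\<Sum>q\<in>S. M p q * x q) = 0)"
proof -
  obtain f where "finite_enumeration S (card S) f"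
    using finite_enumeration_exists[OF assms(1)] .
  then interpret finite_enumeration S "card S" f .
  have "det (mat_of (\<lambda>q p. M p q)) = 0"
    using assms(2) by (simp add: det_mat_of_eq_0_iff mult.commute)
  then have "det (mat_of M) = 0"
    by (metis det_transpose mat_of_carrier transpose_mat_of)
  then show ?thesis
    by (simp add: det_mat_of_eq_0_iff)
qed

lemma left_solvable_if_left_kernel_trivial:
  fixes M :: "'a \<Rightarrow> 'a \<Rightarrow> 'b :: field"
  assumes "finite S" and "\<And>y. \<forall>q\<in>S. (\<Sum>p\<in>S. y p * M p q) = 0 \<Longrightarrow> \<forall>p\<in>S. y p = 0"
  shows "\<exists>y. \<forall>q\<in>S. (\<Sum>p\<in>S. y p * M p q) = c q"
proof -
  obtain f where "finite_enumeration S (card S) f"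
    using finite_enumeration_exists[OF assms(1)] .
  then interpret finite_enumeration S "card S" f .
  have "det (mat_of (\<lambda>q p. M p q)) \<noteq> 0"
    using assms(2) by (auto simp: det_mat_of_eq_0_iff mult.commute)
  then show ?thesis
    using solvable_if_det_mat_of_nonzero by (simp add: mult.commute)
qed

lemma sum_eq_0_obtains_pos_and_neg:
  fixes u :: "'a \<Rightarrow> real"
  assumes "finite A" and "sum u A = 0" and "a \<in> A" and "u a \<noteq> 0"
  obtains b c where "b \<in> A" "0 < u b" and "c \<in> A" "u c < 0"
proof -
  have "\<exists>b\<in>A. 0 < f b" if "sum f A = 0" "f a \<noteq> 0" for f :: "'a \<Rightarrow> real"
  proof (rule ccontr)
    assume "\<not> (\<exists>b\<in>A. 0 < f b)"
    then have "\<forall>b\<in>A. 0 \<le> - f b"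
      by auto
    then have "\<forall>b\<in>A. - f b = 0"
      using sum_nonneg_eq_0_iff[of A "\<lambda>b. - f b"] assms(1) that(1) by (simp add: sum_negf)
    with that(2) assms(3) show False
      by simp
  qed
  from this[of u] this[of "\<lambda>b. - u b"] assms that show ?thesis
    by (force simp: sum_negf)
qed

locale markov_generator =
  fixes n :: nat and K :: rmat
  assumes generator: "generator_on {..<n} K"
begin

abbreviation "E \<equiv> edges n K"
abbreviation "AB \<equiv> ab_states n K"
abbreviation "IN \<equiv> in_states n K"
abbreviation "SO \<equiv> so_states n K"
abbreviation "ABS \<equiv> abs_classes n K"

lemma offdiag_nonneg: "p < n \<Longrightarrow> q < n \<Longrightarrow> p \<noteq> q \<Longrightarrow> 0 \<le> K p q"
  using generator unfolding generator_on_def by auto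

lemma column_sum_eq_0: "q < n \<Longrightarrow> (\<Sum>p<n. K p q) = 0"
  using generator unfolding generator_on_def by auto

lemma edge_iff: "(q, p) \<in> E \<longleftrightarrow> q < n \<and> p < n \<and> p \<noteq> q \<and> 0 < K p q"
  unfolding edges_def by auto

lemma reachable_lt: "(p, q) \<in> E\<^sup>* \<Longrightarrow> p < n \<Longrightarrow> q < n"
  by (induction rule: rtrancl_induct) (auto simp: edge_iff)

lemma mem_scc_self: "p < n \<Longrightarrow> p \<in> scc n K p"
  unfolding scc_def by auto

lemma scc_eq: "q \<in> scc n K p \<Longrightarrow> scc n K q = scc n K p"
  unfolding scc_def by (auto intro: rtrancl_trans)

lemma scc_subset: "scc n K p \<subseteq> {..<n}"
  unfolding scc_def by auto

lemma reaches_absorbing: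
  assumes "p < n"
  obtains x where "(p, x) \<in> E\<^sup>*" and "is_absorbing n K (scc n K x)"
proof -
  define R where "R x = {y. (x, y) \<in> E\<^sup>*}" for x
  have finite_R: "x < n \<Longrightarrow> finite (R x)" for x
    by (rule finite_subset[of _ "{..<n}"]) (auto simp: R_def dest: reachable_lt)
  obtain x where px: "(p, x) \<in> E\<^sup>*"
    and minimal: "\<And>y. (p, y) \<in> E\<^sup>* \<Longrightarrow> card (R x) \<le> card (R y)"
    using ex_has_least_nat[of "\<lambda>x. (p, x) \<in> E\<^sup>*" p "\<lambda>x. card (R x)"] by auto
  have "is_absorbing n K (scc n K x)"
    unfolding is_absorbing_def
  proof (intro ballI allI impI)
    fix x' y assume x': "x' \<in> scc n K x" and edge: "(x', y) \<in> E"
    have xy: "(x, y) \<in> E\<^sup>*"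
      using x' edge unfolding scc_def by auto
    have "R y \<subseteq> R x" and "card (R x) \<le> card (R y)"
      using xy minimal[of y] px unfolding R_def by (auto intro: rtrancl_trans)
    then have "R y = R x"
      using finite_R[OF reachable_lt[OF px assms]] by (meson card_seteq)
    then have "(y, x) \<in> E\<^sup>*"
      unfolding R_def by auto
    then show "y \<in> scc n K x"
      using xy edge unfolding scc_def edge_iff by auto
  qed
  with px that show ?thesis by blast
qed

lemma mem_AB_iff: "p \<in> AB \<longleftrightarrow> p < n \<and> is_absorbing n K (scc n K p)"
  unfolding ab_states_def abs_classes_def sccs_def
  by (auto dest: scc_eq simp: mem_scc_self) (use scc_subset in blast)

lemma ABS_eq_scc:
  assumes "C \<in> ABS" and "p \<in> C"
  shows "C = scc n K p"
proof -
  obtain c where "C = scc n K c"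
    using assms(1) unfolding abs_classes_def sccs_def by auto
  with assms(2) scc_eq show ?thesis
    by auto
qed

lemma ABS_subset_AB: "C \<in> ABS \<Longrightarrow> C \<subseteq> AB"
  unfolding ab_states_def by auto

lemma ABS_absorbing: "C \<in> ABS \<Longrightarrow> is_absorbing n K C"
  unfolding abs_classes_def by auto

lemma ABS_subset: "C \<in> ABS \<Longrightarrow> C \<subseteq> {..<n}"
  unfolding abs_classes_def sccs_def using scc_subset by auto

lemma finite_ABS_member: "C \<in> ABS \<Longrightarrow> finite C"
  using ABS_subset finite_subset by blast

lemma ABS_nonempty: "C \<in> ABS \<Longrightarrow> C \<noteq> {}"
  unfolding abs_classes_def sccs_def using mem_scc_self by auto

lemma finite_ABS: "finite ABS"
  unfolding abs_classes_def sccs_def by auto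

lemma scc_in_ABS: "p \<in> AB \<Longrightarrow> scc n K p \<in> ABS"
  unfolding mem_AB_iff abs_classes_def sccs_def by auto

lemma AB_subset: "AB \<subseteq> {..<n}"
  by (auto simp: mem_AB_iff)

lemma states_partition:
  "IN = {..<n} - AB - SO" "SO \<subseteq> {..<n} - AB"
  unfolding in_states_def so_states_def is_source_def by (auto simp: mem_AB_iff)

lemma left_null_min_propagates:
  assumes min: "\<forall>r<n. x q \<le> x r" and q: "q < n"
    and null: "(\<Sum>r<n. x r * K r q) = 0" and edge: "(q, y) \<in> E"
  shows "x y = x q"
proof -
  have "(\<Sum>r<n. (x r - x q) * K r q) = (\<Sum>r<n. x r * K r q) - x q * (\<Sum>r<n. K r q)"
    by (simp add: algebra_simps sum_subtractf sum_distrib_left)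
  also have "\<dots> = 0"
    using null column_sum_eq_0[OF q] by simp
  finally have sum_eq_0: "(\<Sum>r<n. (x r - x q) * K r q) = 0" .
  have nonneg: "\<forall>r\<in>{..<n}. 0 \<le> (x r - x q) * K r q"
  proof
    fix r assume "r \<in> {..<n}"
    then show "0 \<le> (x r - x q) * K r q"
      using min q offdiag_nonneg[of r q] by (cases "r = q") (auto intro!: mult_nonneg_nonneg)
  qed
  have "\<forall>r\<in>{..<n}. (x r - x q) * K r q = 0"
    using sum_nonneg_eq_0_iff[of "{..<n}" "\<lambda>r. (x r - x q) * K r q"] sum_eq_0 nonneg by simp
  moreover have "y < n" "0 < K y q"
    using edge by (auto simp: edge_iff)
  ultimately show ?thesis
    by force
qed

definition escapable :: "nat set \<Rightarrow> bool" where
  "escapable S \<longleftrightarrow> S \<subseteq> {..<n} \<and> (\<forall>p\<in>S. \<exists>y. y \<notin> S \<and> (p, y) \<in> E\<^sup>*)"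

lemma left_null_nonneg:
  assumes S: "escapable S"
    and outside: "\<forall>p<n. p \<notin> S \<longrightarrow> 0 \<le> x p"
    and null: "\<forall>q\<in>S. (\<Sum>r<n. x r * K r q) = 0"
  shows "\<forall>p<n. 0 \<le> x p"
proof (rule ccontr)
  assume "\<not> (\<forall>p<n. 0 \<le> x p)"
  then obtain p where p: "p < n" "x p < 0"
    by (auto simp: not_le)
  define q where "q = arg_min_on x {..<n}"
  have q: "q < n" and min: "\<forall>r<n. x q \<le> x r"
    using arg_min_if_finite[of "{..<n}" x] p unfolding q_def by (auto simp: not_less)
  have neg: "x q < 0"
    using min p by (meson le_less_trans)
  have in_S: "z \<in> S" if "z < n" "x z = x q" for z
    using that outside neg by (metis not_le)
  have stays: "z < n \<and> x z = x q" if "(q, z) \<in> E\<^sup>*" for z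
    using that
  proof (induction rule: rtrancl_induct)
    case (step z w)
    then have "x w = x z"
      using min null in_S by (intro left_null_min_propagates) auto
    with step show ?case
      by (simp add: edge_iff)
  qed (use q in simp)
  obtain y where "y \<notin> S" "(q, y) \<in> E\<^sup>*"
    using S in_S[OF q refl] unfolding escapable_def by blast
  with stays in_S show False
    by blast
qed

lemma left_null_eq_0:
  assumes S: "escapable S"
    and outside: "\<forall>p<n. p \<notin> S \<longrightarrow> x p = 0"
    and null: "\<forall>q\<in>S. (\<Sum>r<n. x r * K r q) = 0"
  shows "\<forall>p<n. x p = 0"
proof -
  have "\<forall>q\<in>S. (\<Sum>r<n. - x r * K r q) = 0"
    using null by (simp add: sum_negf)
  then have "\<forall>p<n. 0 \<le> - x p"
    using outside by (intro left_null_nonneg[OF S]) auto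
  moreover have "\<forall>p<n. 0 \<le> x p"
    using outside null by (intro left_null_nonneg[OF S]) auto
  ultimately show ?thesis
    by force
qed

lemma left_null_column_sums_eq_1:
  assumes S: "escapable S"
    and null: "\<forall>C\<in>I. \<forall>q\<in>S. (\<Sum>r<n. X C r * K r q) = 0"
    and outside: "\<forall>p<n. p \<notin> S \<longrightarrow> (\<Sum>C\<in>I. X C p) = 1"
  shows "\<forall>p<n. (\<Sum>C\<in>I. X C p) = 1"
proof -
  define y where "y r = (\<Sum>C\<in>I. X C r) - 1" for r
  have "(\<Sum>r<n. y r * K r q) = 0" if "q \<in> S" for q
  proof -
    have "(\<Sum>r<n. (\<Sum>C\<in>I. X C r) * K r q) = (\<Sum>C\<in>I. \<Sum>r<n. X C r * K r q)"
      unfolding sum_distrib_right by (rule sum.swap)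
    also have "\<dots> = 0"
      using that null by simp
    finally have "(\<Sum>r<n. (\<Sum>C\<in>I. X C r) * K r q) = 0" .
    moreover have "(\<Sum>r<n. K r q) = 0"
      using that S column_sum_eq_0 unfolding escapable_def by auto
    ultimately show ?thesis
      by (simp add: y_def left_diff_distrib sum_subtractf)
  qed
  then have "\<forall>p<n. y p = 0"
    using outside by (intro left_null_eq_0[OF S]) (auto simp: y_def)
  then show ?thesis
    by (simp add: y_def)
qed

lemma restricted_left_kernel_trivial:
  assumes S: "escapable S" and null: "\<forall>q\<in>S. (\<Sum>r\<in>S. y r * K r q) = 0"
  shows "\<forall>p\<in>S. y p = 0"
proof -
  define x where "x r = (if r \<in> S then y r else 0)" for r
  have sum_x: "(\<Sum>r<n. x r * K r q) = (\<Sum>r\<in>S. y r * K r q)" for q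
    using S unfolding escapable_def by (intro sum.mono_neutral_cong_right) (auto simp: x_def)
  have "\<forall>q\<in>S. (\<Sum>r<n. x r * K r q) = 0"
    using null sum_x by simp
  then have "\<forall>p<n. x p = 0"
    by (intro left_null_eq_0[OF S]) (auto simp: x_def)
  then show ?thesis
    using S unfolding escapable_def x_def by auto
qed

lemma ex1_restricted_left_solution:
  assumes S: "escapable S"
  shows "\<exists>!X. (\<forall>C q. C \<notin> I \<or> q \<notin> S \<longrightarrow> X C q = 0) \<and>
             (\<forall>C\<in>I. \<forall>q\<in>S. (\<Sum>r\<in>S. X C r * K r q) = c C q)"
proof (rule ex_ex1I)
  have "finite S"
    using S finite_subset unfolding escapable_def by blast
  have "\<exists>y. \<forall>q\<in>S. (\<Sum>r\<in>S. y r * K r q) = c C q" for C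
    by (rule left_solvable_if_left_kernel_trivial[OF \<open>finite S\<close> restricted_left_kernel_trivial[OF S]])
  then obtain Y where Y: "\<forall>C. \<forall>q\<in>S. (\<Sum>r\<in>S. Y C r * K r q) = c C q"
    using choice[of "\<lambda>C y. \<forall>q\<in>S. (\<Sum>r\<in>S. y r * K r q) = c C q"] by blast
  define X where "X C q = (if C \<in> I \<and> q \<in> S then Y C q else 0)" for C q
  have "(\<Sum>r\<in>S. X C r * K r q) = c C q" if "C \<in> I" "q \<in> S" for C q
    using Y that by (simp add: X_def)
  then show "\<exists>X. (\<forall>C q. C \<notin> I \<or> q \<notin> S \<longrightarrow> X C q = 0) \<and>
            (\<forall>C\<in>I. \<forall>q\<in>S. (\<Sum>r\<in>S. X C r * K r q) = c C q)"
    by (intro exI[of _ X]) (auto simp: X_def)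
next
  fix X1 X2
  assume X1: "(\<forall>C q. C \<notin> I \<or> q \<notin> S \<longrightarrow> X1 C q = 0) \<and>
              (\<forall>C\<in>I. \<forall>q\<in>S. (\<Sum>r\<in>S. X1 C r * K r q) = c C q)"
     and X2: "(\<forall>C q. C \<notin> I \<or> q \<notin> S \<longrightarrow> X2 C q = 0) \<and>
              (\<forall>C\<in>I. \<forall>q\<in>S. (\<Sum>r\<in>S. X2 C r * K r q) = c C q)"
  have "X1 C q = X2 C q" for C q
  proof (cases "C \<in> I \<and> q \<in> S")
    case True
    then have "\<forall>q\<in>S. (\<Sum>r\<in>S. (X1 C r - X2 C r) * K r q) = 0"
      using X1 X2 by (simp add: left_diff_distrib sum_subtractf)
    then have "\<forall>r\<in>S. X1 C r - X2 C r = 0"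
      by (rule restricted_left_kernel_trivial[OF S])
    with True show ?thesis
      by simp
  next
    case False
    then have "X1 C q = 0" "X2 C q = 0"
      using X1 X2 by auto
    then show ?thesis
      by simp
  qed
  then show "X1 = X2"
    by blast
qed

lemma escapable_if_disjoint_AB:
  assumes "S \<subseteq> {..<n} - AB"
  shows "escapable S"
  unfolding escapable_def
proof (intro conjI ballI)
  fix p assume "p \<in> S"
  then have "p < n"
    using assms by auto
  then obtain x where "(p, x) \<in> E\<^sup>*" "is_absorbing n K (scc n K x)"
    by (rule reaches_absorbing)
  moreover have "x < n"
    using \<open>(p, x) \<in> E\<^sup>*\<close> \<open>p < n\<close> by (rule reachable_lt)
  ultimately show "\<exists>y. y \<notin> S \<and> (p, y) \<in> E\<^sup>*"
    using assms by (auto simp: mem_AB_iff)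
qed (use assms in auto)

lemma sum_over_state_classes:
  "(\<Sum>p<n. f p) = (\<Sum>p\<in>AB. f p) + (\<Sum>p\<in>IN. f p) + (\<Sum>p\<in>SO. f p)"
proof -
  have "{..<n} = AB \<union> IN \<union> SO" and "AB \<inter> IN = {}" "(AB \<union> IN) \<inter> SO = {}"
    using states_partition AB_subset by auto
  moreover have "finite AB" "finite IN" "finite SO"
    using states_partition AB_subset by (auto intro: finite_subset[of _ "{..<n}"])
  ultimately show ?thesis
    by (simp add: sum.union_disjoint)
qed

lemma Ltil_nonneg: "0 \<le> Ltil n K C p"
  unfolding Ltil_def by simp

lemma sum_Ltil_eq_1:
  assumes "p \<in> AB"
  shows "(\<Sum>C\<in>ABS. Ltil n K C p) = 1"
proof -
  have "Ltil n K C p = (if C = scc n K p then 1 else 0)" if "C \<in> ABS" for C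
    using that assms ABS_eq_scc[OF that] mem_scc_self AB_subset
    unfolding Ltil_def by auto
  then show ?thesis
    using scc_in_ABS[OF assms] finite_ABS by simp
qed

lemma Amat_equation:
  assumes "C \<in> ABS" and "q \<in> IN"
  shows "(\<Sum>r\<in>IN. Amat n K C r * K r q) = - (\<Sum>p\<in>AB. Ltil n K C p * K p q)"
proof -
  have "escapable IN"
    using states_partition by (intro escapable_if_disjoint_AB) auto
  have "(\<forall>C q. C \<notin> ABS \<or> q \<notin> IN \<longrightarrow> Amat n K C q = 0) \<and>
    (\<forall>C\<in>ABS. \<forall>q\<in>IN. (\<Sum>r\<in>IN. Amat n K C r * K r q) = - (\<Sum>p\<in>AB. Ltil n K C p * K p q))"
    unfolding Amat_def by (rule theI'[OF ex1_restricted_left_solution[OF \<open>escapable IN\<close>]])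
  with assms show ?thesis
    by blast
qed

lemma Bmat_equation:
  assumes "C \<in> ABS" and "q \<in> SO"
  shows "(\<Sum>r\<in>SO. Bmat n K C r * K r q) =
           - ((\<Sum>p\<in>AB. Ltil n K C p * K p q) + (\<Sum>r\<in>IN. Amat n K C r * K r q))"
proof -
  have "escapable SO"
    using states_partition by (intro escapable_if_disjoint_AB) auto
  have "(\<forall>C q. C \<notin> ABS \<or> q \<notin> SO \<longrightarrow> Bmat n K C q = 0) \<and>
    (\<forall>C\<in>ABS. \<forall>q\<in>SO. (\<Sum>r\<in>SO. Bmat n K C r * K r q) =
       - ((\<Sum>p\<in>AB. Ltil n K C p * K p q) + (\<Sum>r\<in>IN. Amat n K C r * K r q)))"
    unfolding Bmat_def by (rule theI'[OF ex1_restricted_left_solution[OF \<open>escapable SO\<close>]])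
  with assms show ?thesis
    by blast
qed

lemma no_edge_from_IN_to_SO:
  assumes "q \<in> IN" and "r \<in> SO"
  shows "K r q = 0"
proof (rule ccontr)
  assume "K r q \<noteq> 0"
  moreover have "q < n" "r < n" "r \<noteq> q"
    using assms states_partition by auto
  ultimately have "(q, r) \<in> E"
    using offdiag_nonneg[of r q] by (auto simp: edge_iff)
  moreover have "is_source n K (scc n K r)"
    using assms(2) unfolding so_states_def by auto
  ultimately have "q \<in> scc n K r"
    using mem_scc_self[OF \<open>r < n\<close>] unfolding is_source_def by blast
  then have "scc n K q = scc n K r"
    by (rule scc_eq)
  with assms show False
    unfolding in_states_def so_states_def by auto
qed

lemma LM_left_null:
  assumes C: "C \<in> ABS" and q: "q \<in> {..<n} - AB"
  shows "(\<Sum>p<n. LM n K C p * K p q) = 0"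
proof -
  have "AB \<inter> IN = {}" "AB \<inter> SO = {}" "IN \<inter> SO = {}"
    using states_partition by auto
  then have "(\<Sum>p<n. LM n K C p * K p q) =
      (\<Sum>p\<in>AB. Ltil n K C p * K p q) + (\<Sum>p\<in>IN. Amat n K C p * K p q)
        + (\<Sum>p\<in>SO. Bmat n K C p * K p q)"
    unfolding sum_over_state_classes by (auto simp: LM_def intro!: sum.cong arg_cong2[of _ _ _ _ "(+)"])
  also have "\<dots> = 0"
  proof (cases "q \<in> IN")
    case True
    then show ?thesis
      using Amat_equation[OF C True] no_edge_from_IN_to_SO by simp
  next
    case False
    then have "q \<in> SO"
      using q states_partition by auto
    then show ?thesis
      using Bmat_equation[OF C] by simp
  qed
  finally show ?thesis .
qed

lemma LM_nonneg:
  assumes "C \<in> ABS" and "p < n"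
  shows "0 \<le> LM n K C p"
proof -
  have "\<forall>p<n. 0 \<le> LM n K C p"
  proof (rule left_null_nonneg)
    show "escapable ({..<n} - AB)"
      by (rule escapable_if_disjoint_AB) simp
    show "\<forall>p<n. p \<notin> {..<n} - AB \<longrightarrow> 0 \<le> LM n K C p"
      by (simp add: LM_def Ltil_nonneg)
    show "\<forall>q\<in>{..<n} - AB. (\<Sum>p<n. LM n K C p * K p q) = 0"
      using LM_left_null[OF assms(1)] by blast
  qed
  with assms show ?thesis
    by blast
qed

lemma sum_LM_eq_1:
  assumes "p < n"
  shows "(\<Sum>C\<in>ABS. LM n K C p) = 1"
proof -
  have "\<forall>p<n. (\<Sum>C\<in>ABS. LM n K C p) = 1"
  proof (rule left_null_column_sums_eq_1)
    show "escapable ({..<n} - AB)"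
      by (rule escapable_if_disjoint_AB) simp
    show "\<forall>p<n. p \<notin> {..<n} - AB \<longrightarrow> (\<Sum>C\<in>ABS. LM n K C p) = 1"
      by (simp add: LM_def sum_Ltil_eq_1)
    show "\<forall>C\<in>ABS. \<forall>q\<in>{..<n} - AB. (\<Sum>p<n. LM n K C p * K p q) = 0"
      using LM_left_null by blast
  qed
  with assms show ?thesis
    by blast
qed

lemma absorbing_column_sum_eq_0:
  assumes C: "C \<in> ABS" and q: "q \<in> C"
  shows "(\<Sum>p\<in>C. K p q) = 0"
proof -
  have "q < n"
    using ABS_subset[OF C] q by auto
  have "K p q = 0" if "p < n" "p \<notin> C" for p
  proof (rule ccontr)
    assume "K p q \<noteq> 0"
    moreover have "p \<noteq> q"
      using that q by auto
    ultimately have "(q, p) \<in> E"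
      using that \<open>q < n\<close> offdiag_nonneg[of p q] by (auto simp: edge_iff)
    with ABS_absorbing[OF C] q that show False
      unfolding is_absorbing_def by blast
  qed
  then have "(\<Sum>p<n. K p q) = (\<Sum>p\<in>C. K p q)"
    using ABS_subset[OF C] by (intro sum.mono_neutral_right) auto
  with column_sum_eq_0[OF \<open>q < n\<close>] show ?thesis
    by simp
qed

lemma right_null_if_nonneg:
  assumes C: "C \<in> ABS" and nonneg: "\<forall>p\<in>C. 0 \<le> (\<Sum>q\<in>C. K p q * w q)"
  shows "\<forall>p\<in>C. (\<Sum>q\<in>C. K p q * w q) = 0"
proof -
  have "(\<Sum>p\<in>C. \<Sum>q\<in>C. K p q * w q) = (\<Sum>q\<in>C. (\<Sum>p\<in>C. K p q) * w q)"
    unfolding sum_distrib_right by (rule sum.swap)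
  also have "\<dots> = 0"
    using absorbing_column_sum_eq_0[OF C] by simp
  finally show ?thesis
    using sum_nonneg_eq_0_iff[of C "\<lambda>p. \<Sum>q\<in>C. K p q * w q"] finite_ABS_member[OF C] nonneg
    by simp
qed

lemma right_null_positive_part:
  assumes C: "C \<in> ABS" and null: "\<forall>p\<in>C. (\<Sum>q\<in>C. K p q * v q) = 0"
  shows "\<forall>p\<in>C. (\<Sum>q\<in>C. K p q * max (v q) 0) = 0"
proof (rule right_null_if_nonneg[OF C], intro ballI)
  fix p assume p: "p \<in> C"
  have offdiag: "0 \<le> K p q" if "q \<in> C - {p}" for q
    using that p ABS_subset[OF C] offdiag_nonneg[of p q] by auto
  have split: "(\<Sum>q\<in>C. K p q * f q) = K p p * f p + (\<Sum>q\<in>C - {p}. K p q * f q)" for f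
    using p finite_ABS_member[OF C] by (simp add: sum.remove)
  show "0 \<le> (\<Sum>q\<in>C. K p q * max (v q) 0)"
  proof (cases "0 < v p")
    case True
    have "(\<Sum>q\<in>C - {p}. K p q * v q) \<le> (\<Sum>q\<in>C - {p}. K p q * max (v q) 0)"
      using offdiag by (intro sum_mono mult_left_mono) auto
    then show ?thesis
      using null p True split[of v] split[of "\<lambda>q. max (v q) 0"] by simp
  next
    case False
    have "0 \<le> (\<Sum>q\<in>C - {p}. K p q * max (v q) 0)"
      using offdiag by (intro sum_nonneg mult_nonneg_nonneg) auto
    then show ?thesis
      using False split[of "\<lambda>q. max (v q) 0"] by simp
  qed
qed

lemma right_null_nonneg_zero_spreads:
  assumes C: "C \<in> ABS" and nonneg: "\<forall>q\<in>C. 0 \<le> w q"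
    and null: "\<forall>p\<in>C. (\<Sum>q\<in>C. K p q * w q) = 0"
    and a: "a \<in> C" "w a = 0"
  shows "\<forall>y\<in>C. w y = 0"
proof -
  have zero_pred: "w q = 0" if p: "p \<in> C" "w p = 0" and edge: "(q, p) \<in> E" and q: "q \<in> C" for p q
  proof -
    have terms_nonneg: "\<forall>r\<in>C - {p}. 0 \<le> K p r * w r"
      using nonneg p ABS_subset[OF C] offdiag_nonneg by (auto intro!: mult_nonneg_nonneg simp: subset_iff)
    have "(\<Sum>r\<in>C. K p r * w r) = K p p * w p + (\<Sum>r\<in>C - {p}. K p r * w r)"
      using p finite_ABS_member[OF C] by (simp add: sum.remove)
    then have "(\<Sum>r\<in>C - {p}. K p r * w r) = 0"
      using null p by simp
    then have "\<forall>r\<in>C - {p}. K p r * w r = 0"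
      using sum_nonneg_eq_0_iff[of "C - {p}" "\<lambda>r. K p r * w r"] terms_nonneg finite_ABS_member[OF C]
      by simp
    moreover have "q \<in> C - {p}" "0 < K p q"
      using q edge by (auto simp: edge_iff)
    ultimately show ?thesis
      by force
  qed
  have "u \<in> C \<longrightarrow> w u = 0" if "(u, a) \<in> E\<^sup>*" for u
    using that
  proof (induction rule: converse_rtrancl_induct)
    case (step u z)
    show ?case
    proof
      assume "u \<in> C"
      then have "z \<in> C"
        using step.hyps(1) ABS_absorbing[OF C] unfolding is_absorbing_def by blast
      with step \<open>u \<in> C\<close> show "w u = 0"
        using zero_pred[of z u] by blast
    qed
  qed (use a in simp)
  moreover have "(y, a) \<in> E\<^sup>*" if "y \<in> C" for y
    using that ABS_eq_scc[OF C a(1)] unfolding scc_def by auto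
  ultimately show ?thesis
    by blast
qed

abbreviation stationary_on :: "nat set \<Rightarrow> (nat \<Rightarrow> real) \<Rightarrow> bool" where
  "stationary_on C v \<equiv> (\<forall>p. p \<notin> C \<longrightarrow> v p = 0) \<and> (\<forall>p\<in>C. 0 \<le> v p) \<and> sum v C = 1 \<and>
     (\<forall>p\<in>C. (\<Sum>q\<in>C. K p q * v q) = 0)"

lemma ex_stationary_on:
  assumes C: "C \<in> ABS"
  shows "\<exists>v. stationary_on C v"
proof -
  have "\<exists>y. (\<exists>q\<in>C. y q \<noteq> 0) \<and> (\<forall>q\<in>C. (\<Sum>p\<in>C. y p * K p q) = 0)"
    using ABS_nonempty[OF C] absorbing_column_sum_eq_0[OF C] by (intro exI[of _ "\<lambda>_. 1"]) auto
  then obtain v where v: "\<exists>p\<in>C. v p \<noteq> 0" "\<forall>p\<in>C. (\<Sum>q\<in>C. K p q * v q) = 0"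
    using right_kernel_nontrivial_if_left_kernel_nontrivial[OF finite_ABS_member[OF C]] by blast
  obtain u where u: "\<exists>p\<in>C. 0 < u p" "\<forall>p\<in>C. (\<Sum>q\<in>C. K p q * u q) = 0"
  proof -
    from v(1) obtain p where "p \<in> C" "v p \<noteq> 0" ..
    then consider "0 < v p" | "0 < - v p"
      by linarith
    then show ?thesis
      using that[of v] that[of "\<lambda>q. - v q"] \<open>p \<in> C\<close> v(2) by cases (auto simp: sum_negf)
  qed
  define w where "w q = (if q \<in> C then max (u q) 0 else 0)" for q
  have w_nonneg: "0 \<le> w q" for q
    by (simp add: w_def)
  have w_null: "\<forall>p\<in>C. (\<Sum>q\<in>C. K p q * w q) = 0"
    using right_null_positive_part[OF C u(2)] by (simp add: w_def)
  from u(1) obtain p where p: "p \<in> C" "0 < w p"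
    by (auto simp: w_def)
  have "w p \<le> sum w C"
    using p finite_ABS_member[OF C] w_nonneg by (intro member_le_sum) auto
  with p have pos: "0 < sum w C"
    by linarith
  have "stationary_on C (\<lambda>q. w q / sum w C)"
    using pos w_nonneg w_null
    by (auto simp: w_def simp flip: sum_divide_distrib)
  then show ?thesis
    by (rule exI[of _ "\<lambda>q. w q / sum w C"])
qed

lemma stationary_on_unique:
  assumes C: "C \<in> ABS" and v1: "stationary_on C v1" and v2: "stationary_on C v2"
  shows "v1 = v2"
proof -
  define u where "u p = v1 p - v2 p" for p
  have u_null: "\<forall>p\<in>C. (\<Sum>q\<in>C. K p q * u q) = 0"
    using v1 v2 by (simp add: u_def right_diff_distrib sum_subtractf)
  have sum_u: "sum u C = 0"
    using v1 v2 by (simp add: u_def sum_subtractf)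
  have "u p = 0" if p: "p \<in> C" for p
  proof (rule ccontr)
    assume "u p \<noteq> 0"
    then obtain b c where b: "b \<in> C" "0 < u b" and c: "c \<in> C" "u c < 0"
      by (rule sum_eq_0_obtains_pos_and_neg[OF finite_ABS_member[OF C] sum_u p])
    have "\<forall>y\<in>C. max (u y) 0 = 0"
      by (rule right_null_nonneg_zero_spreads[OF C _ right_null_positive_part[OF C u_null] c(1)])
        (use c in auto)
    then have "max (u b) 0 = 0"
      using b(1) by blast
    with b(2) show False
      by (simp add: max_def)
  qed
  show ?thesis
  proof
    fix p
    show "v1 p = v2 p"
      using \<open>p \<in> C \<Longrightarrow> u p = 0\<close> v1 v2 unfolding u_def by (cases "p \<in> C") auto
  qed
qed

lemma stat_vec_nonneg_supported:
  assumes C: "C \<in> ABS"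
  shows "0 \<le> stat_vec K C p" and "p \<notin> C \<Longrightarrow> stat_vec K C p = 0"
proof -
  define v where "v = (THE v. stationary_on C v)"
  have "\<exists>!v. stationary_on C v"
    using ex_stationary_on[OF C] stationary_on_unique[OF C] by (rule ex_ex1I)
  then have v: "stationary_on C v"
    unfolding v_def by (rule theI')
  then have "0 \<le> v p"
    by (cases "p \<in> C") auto
  moreover have "p \<notin> C \<Longrightarrow> v p = 0"
    using v by blast
  moreover have "stat_vec K C = (if card C = 1 then (\<lambda>p. if p \<in> C then 1 else 0) else v)"
    unfolding stat_vec_def v_def by simp
  ultimately show "0 \<le> stat_vec K C p" and "p \<notin> C \<Longrightarrow> stat_vec K C p = 0"
    by auto
qed

lemma PiM_nonneg: "0 \<le> PiM n K q D"
  unfolding PiM_def using stat_vec_nonneg_supported(1) by simp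

lemma PiM_eq_0_outside: "q \<notin> D \<Longrightarrow> PiM n K q D = 0"
  unfolding PiM_def using stat_vec_nonneg_supported(2) by simp

lemma LM_mult_PiM_eq_0:
  assumes "C \<in> ABS" and "D \<in> ABS" and "C \<noteq> D"
  shows "LM n K C q * PiM n K q D = 0"
proof (cases "q \<in> D")
  case True
  then have "q \<in> AB"
    using ABS_subset_AB[OF assms(2)] by auto
  moreover have "q \<notin> C"
    using assms True ABS_eq_scc by metis
  ultimately show ?thesis
    by (simp add: LM_def Ltil_def)
qed (simp add: PiM_eq_0_outside)

end

lemma generator_on_lumped:
  fixes L :: "'c \<Rightarrow> nat \<Rightarrow> real" and P :: "nat \<Rightarrow> 'c \<Rightarrow> real"
  assumes Ks: "generator_on {..<n} Ks"
    and L_nonneg: "\<And>C p. C \<in> I \<Longrightarrow> p < n \<Longrightarrow> 0 \<le> L C p"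
    and L_sum: "\<And>p. p < n \<Longrightarrow> (\<Sum>C\<in>I. L C p) = 1"
    and P_nonneg: "\<And>q D. D \<in> I \<Longrightarrow> q < n \<Longrightarrow> 0 \<le> P q D"
    and L_P_disjoint: "\<And>C D q. C \<in> I \<Longrightarrow> D \<in> I \<Longrightarrow> C \<noteq> D \<Longrightarrow> L C q * P q D = 0"
  shows "generator_on I (\<lambda>C D. \<Sum>p<n. \<Sum>q<n. L C p * Ks p q * P q D)"
  unfolding generator_on_def
proof (intro conjI ballI impI)
  fix C D assume C: "C \<in> I" and D: "D \<in> I" and "C \<noteq> D"
  have "0 \<le> L C p * Ks p q * P q D" if "p < n" "q < n" for p q
  proof (cases "p = q")
    case True
    then have "L C p * Ks p q * P q D = Ks q q * (L C q * P q D)"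
      by (simp add: ac_simps)
    then show ?thesis
      using L_P_disjoint[OF C D \<open>C \<noteq> D\<close>, of q] by (metis mult_zero_right order_refl)
  next
    case False
    then show ?thesis
      using that Ks L_nonneg[OF C] P_nonneg[OF D] unfolding generator_on_def
      by (auto intro!: mult_nonneg_nonneg)
  qed
  then show "0 \<le> (\<Sum>p<n. \<Sum>q<n. L C p * Ks p q * P q D)"
    by (auto intro!: sum_nonneg)
next
  fix D assume "D \<in> I"
  have "(\<Sum>C\<in>I. \<Sum>p<n. \<Sum>q<n. L C p * Ks p q * P q D)
      = (\<Sum>p<n. \<Sum>q<n. (\<Sum>C\<in>I. L C p) * Ks p q * P q D)"
    by (subst sum.swap) (simp add: sum_distrib_right sum.swap[of _ I])
  also have "\<dots> = (\<Sum>q<n. (\<Sum>p<n. Ks p q) * P q D)"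
    using L_sum by (subst sum.swap) (simp add: sum_distrib_right)
  also have "\<dots> = 0"
    using Ks unfolding generator_on_def by simp
  finally show "(\<Sum>C\<in>I. \<Sum>p<n. \<Sum>q<n. L C p * Ks p q * P q D) = 0" .
qed

theorem theorem2:
  fixes n :: nat and ms :: "nat list" and Kf Ks :: rmat
  assumes "generator_on {..<n} Kf"
    and "generator_on {..<n} Ks"
    and "block_diag n ms Kf"
  shows "generator_on (abs_classes n Kf) (Ktilde n Kf Ks)"
proof -
  interpret markov_generator n Kf
    by (rule markov_generator.intro) fact
  have "Ktilde n Kf Ks = (\<lambda>C D. \<Sum>p<n. \<Sum>q<n. LM n Kf C p * Ks p q * PiM n Kf q D)"
    by (intro ext) (simp add: Ktilde_def)
  then show ?thesis
    using assms(2) LM_nonneg sum_LM_eq_1 PiM_nonneg LM_mult_PiM_eq_0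
    by (simp add: generator_on_lumped)
qed

end
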